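(* Let $(A,\cdot,\alpha)$ be a Hom-Malcev algebra over a field $\mathbb{K}$ of characteristic $0$, and define for $w,x,y,z\in A$ $$G(w,x,y,z)=J_{\alpha}(w\cdot x,\alpha(y),\alpha(z))-\alpha^{2}(x)\cdot J_{\alpha}(w,y,z)-J_{\alpha}(x,y,z)\cdot\alpha^{2}(w).$$ Then for all $w,x,y,z\in A$: (1) $J_{\alpha}(w\cdot x,\alpha(y),\alpha(z))+J_{\alpha}(x\cdot y,\alpha(z),\alpha(w))+J_{\alpha}(y\cdot z,\alpha(w),\alpha(x))+J_{\alpha}(z\cdot w,\alpha(x),\alpha(y))=0$; (2) $2G(w,x,y,z)-\alpha^{2}(w)\cdot J_{\alpha}(x,y,z)+\alpha^{2}(x)\cdot J_{\alpha}(w,y,z)-\alpha^{2}(y)\cdot J_{\alpha}(z,w,x)+\alpha^{2}(z)\cdot J_{\alpha}(w,x,y)=J_{\alpha}(w\cdot x,\alpha(y),\alpha(z))+J_{\alpha}(y\cdot z,\alpha(w),\alpha(x))$.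
   Context: A multiplicative Hom-algebra is a triple $(A,\cdot,\alpha)$ with $A$ a vector space over $\mathbb{K}$, $\cdot$ bilinear, and $\alpha$ linear with $\alpha(x\cdot y)=\alpha(x)\cdot\alpha(y)$; anticommutative means $x\cdot y=-y\cdot x$. The Hom-Jacobian is $J_{\alpha}(x,y,z)=(x\cdot y)\cdot\alpha(z)+(y\cdot z)\cdot\alpha(x)+(z\cdot x)\cdot\alpha(y)$. A Hom-Malcev algebra is an anticommutative multiplicative Hom-algebra satisfying $J_{\alpha}(\alpha(x),\alpha(y),x\cdot z)=J_{\alpha}(x,y,z)\cdot\alpha^{2}(x)$ for all $x,y,z\in A$. *)

theory Defs
  imports Complex_Main
begin

definition bilinear_op :: "('k::field \<Rightarrow> 'v::ab_group_add \<Rightarrow> 'v) \<Rightarrow> ('v \<Rightarrow> 'v \<Rightarrow> 'v) \<Rightarrow> bool" where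
  "bilinear_op scale mult \<longleftrightarrow>
     (\<forall>x. Vector_Spaces.linear scale scale (mult x)) \<and>
     (\<forall>y. Vector_Spaces.linear scale scale (\<lambda>x. mult x y))"

definition hom_jacobian :: "('v::ab_group_add \<Rightarrow> 'v \<Rightarrow> 'v) \<Rightarrow> ('v \<Rightarrow> 'v) \<Rightarrow> 'v \<Rightarrow> 'v \<Rightarrow> 'v \<Rightarrow> 'v" where
  "hom_jacobian mult alpha x y z =
     mult (mult x y) (alpha z) + mult (mult y z) (alpha x) + mult (mult z x) (alpha y)"

definition hom_malcev_algebra ::
  "('k::field \<Rightarrow> 'v::ab_group_add \<Rightarrow> 'v) \<Rightarrow> ('v \<Rightarrow> 'v \<Rightarrow> 'v) \<Rightarrow> ('v \<Rightarrow> 'v) \<Rightarrow> bool" where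
  "hom_malcev_algebra scale mult alpha \<longleftrightarrow>
     vector_space scale \<and>
     bilinear_op scale mult \<and>
     Vector_Spaces.linear scale scale alpha \<and>
     (\<forall>x y. alpha (mult x y) = mult (alpha x) (alpha y)) \<and>
     (\<forall>x y. mult x y = - mult y x) \<and>
     (\<forall>x y z. hom_jacobian mult alpha (alpha x) (alpha y) (mult x z)
              = mult (hom_jacobian mult alpha x y z) (alpha (alpha x)))"

definition malcev_G :: "('v::ab_group_add \<Rightarrow> 'v \<Rightarrow> 'v) \<Rightarrow> ('v \<Rightarrow> 'v) \<Rightarrow> 'v \<Rightarrow> 'v \<Rightarrow> 'v \<Rightarrow> 'v \<Rightarrow> 'v" where
  "malcev_G mult alpha w x y z =
        hom_jacobian mult alpha (mult w x) (alpha y) (alpha z)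
        - mult (alpha (alpha x)) (hom_jacobian mult alpha w y z)
        - mult (hom_jacobian mult alpha x y z) (alpha (alpha w))"

end

theory Submission
  imports Defs
begin

text \<open>Both identities are consequences of the Malcev identity after polarisation in its
  repeated variable x, which turns it into an identity linear in each of four arguments.
  Identity (1) is the sum of two instances of the polarised identity, identity (2) the sum
  of three; the remaining terms cancel because, for an anticommutative product, the
  Hom-Jacobian is alternating.\<close>

locale anticomm_hom_algebra =
  fixes mult :: "'v::ab_group_add \<Rightarrow> 'v \<Rightarrow> 'v"
    and alpha :: "'v \<Rightarrow> 'v"
  assumes additive_alpha: "additive alpha"
    and additive_mult_left: "additive (\<lambda>a. mult a b)"
    and additive_mult_right: "additive (mult a)"
    and mult_anticomm: "mult a b = - mult b a"
begin

abbreviation J :: "'v \<Rightarrow> 'v \<Rightarrow> 'v \<Rightarrow> 'v" where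
  "J \<equiv> hom_jacobian mult alpha"

lemmas alpha_add = additive.add[OF additive_alpha]
  and alpha_minus = additive.minus[OF additive_alpha]
  and mult_add_left = additive.add[OF additive_mult_left]
  and mult_minus_left = additive.minus[OF additive_mult_left]
  and mult_add_right = additive.add[OF additive_mult_right]
  and mult_minus_right = additive.minus[OF additive_mult_right]

lemma jacobian_cyclic: "J a b c = J b c a"
  unfolding hom_jacobian_def by (simp add: ac_simps)

lemma jacobian_swap: "J b a c = - J a b c"
  unfolding hom_jacobian_def
  by (simp add: mult_anticomm[of b a] mult_anticomm[of a c] mult_anticomm[of c b] mult_minus_left)

lemma jacobian_swap_right: "J a c b = - J a b c"
  by (metis jacobian_cyclic jacobian_swap)

lemma jacobian_minus_right: "J a b (- c) = - J a b c"
  unfolding hom_jacobian_def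
  by (simp add: alpha_minus mult_minus_left mult_minus_right)

lemma jacobian_mult_right_reverse: "J a b (mult c d) = J (mult d c) b a"
  by (metis jacobian_cyclic jacobian_swap jacobian_minus_right mult_anticomm)

lemma jacobian_add_left: "J (a + b) c d = J a c d + J b c d"
  unfolding hom_jacobian_def by (simp add: alpha_add mult_add_left mult_add_right)

lemma jacobian_add_right: "J c d (a + b) = J c d a + J c d b"
  by (metis jacobian_add_left jacobian_cyclic)

end

locale hom_malcev = anticomm_hom_algebra +
  assumes malcev_identity:
    "hom_jacobian mult alpha (alpha x) (alpha y) (mult x z)
       = mult (hom_jacobian mult alpha x y z) (alpha (alpha x))"
begin

lemma malcev_identity_polarized:
  "J (alpha a) (alpha c) (mult b d) + J (alpha b) (alpha c) (mult a d)
     = mult (J a c d) (alpha (alpha b)) + mult (J b c d) (alpha (alpha a))"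
proof -
  have "J (alpha (a + b)) (alpha c) (mult (a + b) d) = mult (J (a + b) c d) (alpha (alpha (a + b)))"
    by (rule malcev_identity)
  then have "J (alpha a) (alpha c) (mult a d) + J (alpha b) (alpha c) (mult b d)
      + (J (alpha a) (alpha c) (mult b d) + J (alpha b) (alpha c) (mult a d))
    = mult (J a c d) (alpha (alpha a)) + mult (J b c d) (alpha (alpha b))
      + (mult (J a c d) (alpha (alpha b)) + mult (J b c d) (alpha (alpha a)))"
    by (simp add: alpha_add mult_add_left mult_add_right jacobian_add_left jacobian_add_right
        ac_simps)
  then show ?thesis
    by (simp add: malcev_identity)
qed

lemma jacobian_mult_cyclic_sum:
  "J (mult w x) (alpha y) (alpha z) + J (mult x y) (alpha z) (alpha w)
     + J (mult y z) (alpha w) (alpha x) + J (mult z w) (alpha x) (alpha y) = 0"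
proof -
  have "J (mult w x) (alpha y) (alpha z) + J (mult x y) (alpha z) (alpha w)
      + J (mult y z) (alpha w) (alpha x) + J (mult z w) (alpha x) (alpha y)
    = (J (alpha w) (alpha x) (mult y z) + J (alpha y) (alpha x) (mult w z))
      + (J (alpha w) (alpha z) (mult y x) + J (alpha y) (alpha z) (mult w x))"
    using jacobian_cyclic[of "mult w x"] jacobian_cyclic[of "mult y z"]
      jacobian_mult_right_reverse[of "alpha w" "alpha z" y x]
      jacobian_mult_right_reverse[of "alpha y" "alpha x" w z]
    by (simp add: ac_simps)
  also have "\<dots> = (mult (J w x z) (alpha (alpha y)) + mult (J y x z) (alpha (alpha w)))
      + (mult (J w z x) (alpha (alpha y)) + mult (J y z x) (alpha (alpha w)))"
    by (simp only: malcev_identity_polarized)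
  also have "\<dots> = 0"
    by (simp add: jacobian_swap_right[of w z x] jacobian_swap_right[of y z x] mult_minus_left)
  finally show ?thesis .
qed

lemma malcev_G_identity:
  "malcev_G mult alpha w x y z + malcev_G mult alpha w x y z
     - mult (alpha (alpha w)) (J x y z) + mult (alpha (alpha x)) (J w y z)
     - mult (alpha (alpha y)) (J z w x) + mult (alpha (alpha z)) (J w x y)
   = J (mult w x) (alpha y) (alpha z) + J (mult y z) (alpha w) (alpha x)"
proof -
  define A where "A = J (alpha w) (alpha z) (mult x y)"
  define B where "B = J (alpha x) (alpha z) (mult w y)"
  define C where "C = J (mult w x) (alpha y) (alpha z)"
  define D where "D = J (mult y z) (alpha w) (alpha x)"
  define E\<^sub>w where "E\<^sub>w = mult (J x y z) (alpha (alpha w))"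
  define E\<^sub>x where "E\<^sub>x = mult (J w y z) (alpha (alpha x))"
  define E\<^sub>y where "E\<^sub>y = mult (J w x z) (alpha (alpha y))"
  define E\<^sub>z where "E\<^sub>z = mult (J w x y) (alpha (alpha z))"
  txt \<open>Once G is unfolded and each factor \<open>alpha (alpha _)\<close> is moved to the right,
    the claim reads \<open>C - D = E\<^sub>w + E\<^sub>z - E\<^sub>x - E\<^sub>y\<close>, the sum of the following three
    polarised instances.\<close>
  have AB: "A + B = - E\<^sub>x - E\<^sub>w"
    using malcev_identity_polarized[of w z x y]
    by (simp add: A_def B_def E\<^sub>w_def E\<^sub>x_def jacobian_swap_right[of _ z y] mult_minus_left)
  have CA: "C - A = E\<^sub>w - E\<^sub>y"
    using malcev_identity_polarized[of w z y x]
    by (simp add: A_def C_def E\<^sub>w_def E\<^sub>y_def mult_anticomm[of y x] jacobian_minus_right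
        jacobian_cyclic[of "mult w x"] jacobian_swap_right[of _ z x] jacobian_swap[of x y]
        mult_minus_left)
  have DB: "- D - B = E\<^sub>z + E\<^sub>w"
    using malcev_identity_polarized[of w x z y]
    by (simp add: B_def D_def E\<^sub>w_def E\<^sub>z_def mult_anticomm[of z y] jacobian_minus_right
        jacobian_cyclic[of "mult y z"] jacobian_swap[of "alpha z" "alpha x"]
        jacobian_cyclic[of z x y])
  have "C - D = (A + B) + (C - A) + (- D - B)"
    by (simp add: algebra_simps)
  also have "\<dots> = E\<^sub>w + E\<^sub>z - E\<^sub>x - E\<^sub>y"
    by (simp add: AB CA DB algebra_simps)
  finally show ?thesis
    unfolding malcev_G_def
    by (simp add: C_def D_def E\<^sub>w_def E\<^sub>x_def E\<^sub>y_def E\<^sub>z_def jacobian_cyclic[of z w x]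
        mult_anticomm[of "alpha (alpha _)"] algebra_simps)
qed

end

lemma hom_malcev_if_hom_malcev_algebra:
  assumes "hom_malcev_algebra scale mult alpha"
  shows "hom_malcev mult alpha"
proof -
  have linear_additive: "additive f" if "Vector_Spaces.linear scale scale f" for f
    using that by (simp add: Vector_Spaces.linear_iff additive_def)
  from assms show ?thesis
    unfolding hom_malcev_algebra_def bilinear_op_def
    by (intro hom_malcev.intro anticomm_hom_algebra.intro hom_malcev_axioms.intro)
      (blast intro: linear_additive)+
qed

lemma (in vector_space) scale_two: "scale 2 v = v + v"
  using scale_left_distrib[of 1 1 v] by simp

theorem lemma2p6:
  fixes scale :: "'k::field_char_0 \<Rightarrow> 'v::ab_group_add \<Rightarrow> 'v"
    and mult :: "'v \<Rightarrow> 'v \<Rightarrow> 'v"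
    and alpha :: "'v \<Rightarrow> 'v"
  assumes malcev: "hom_malcev_algebra scale mult alpha"
  shows "(\<forall>w x y z.
     hom_jacobian mult alpha (mult w x) (alpha y) (alpha z)
     + hom_jacobian mult alpha (mult x y) (alpha z) (alpha w)
     + hom_jacobian mult alpha (mult y z) (alpha w) (alpha x)
     + hom_jacobian mult alpha (mult z w) (alpha x) (alpha y) = 0)
    \<and> (\<forall>w x y z.
     scale 2 (malcev_G mult alpha w x y z)
     - mult (alpha (alpha w)) (hom_jacobian mult alpha x y z)
     + mult (alpha (alpha x)) (hom_jacobian mult alpha w y z)
     - mult (alpha (alpha y)) (hom_jacobian mult alpha z w x)
     + mult (alpha (alpha z)) (hom_jacobian mult alpha w x y)
     = hom_jacobian mult alpha (mult w x) (alpha y) (alpha z)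
       + hom_jacobian mult alpha (mult y z) (alpha w) (alpha x))"
proof -
  interpret hom_malcev mult alpha
    using malcev by (rule hom_malcev_if_hom_malcev_algebra)
  have "vector_space scale"
    using malcev by (simp add: hom_malcev_algebra_def)
  then have "scale 2 v = v + v" for v
    by (rule vector_space.scale_two)
  then show ?thesis
    using jacobian_mult_cyclic_sum malcev_G_identity by simp
qed

end
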